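(* Let $K$ be a field of characteristic $p>0$, $R=K[x_0,\dots,x_n]$, $\mathfrak{m}=(x_0,\dots,x_n)$, $q=p^e$ and $\mathfrak{m}^{[q]}=(x_0^q,\dots,x_n^q)$. Let $d$ be a positive integer. Then \[\mathfrak{m}^{[q]}:_R\mathfrak{m}^{(n+1)(d-2)+1}\subseteq\mathfrak{m}^{[q]}+\mathfrak{m}^{(n+1)(q-d+1)},\] where $\mathfrak{m}^i=R$ for $i\leqslant0$. *)

theory Defs
  imports Main "HOL-Library.Poly_Mapping"
begin

text \<open>Multivariate polynomials over 'a: finitely supported maps from monomials
(exponent vectors, finitely supported nat-valued functions on nat) to coefficients.\<close>

type_synonym 'a mpoly = "(nat \<Rightarrow>\<^sub>0 nat) \<Rightarrow>\<^sub>0 'a"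

definition polyR :: "nat \<Rightarrow> 'a::comm_ring_1 mpoly set" where
  "polyR n = {f. \<forall>m \<in> Poly_Mapping.keys f. Poly_Mapping.keys (m :: nat \<Rightarrow>\<^sub>0 nat) \<subseteq> {..n}}"

definition Var :: "nat \<Rightarrow> 'a::comm_ring_1 mpoly" where
  "Var i = Poly_Mapping.single (Poly_Mapping.single i 1) 1"

definition ideal_gen :: "nat \<Rightarrow> 'a::comm_ring_1 mpoly set \<Rightarrow> 'a mpoly set" where
  "ideal_gen n S = {(\<Sum>i<k. c i * g i) | (k::nat) c g. \<forall>i<k. c i \<in> polyR n \<and> g i \<in> S}"

definition ideal_sum :: "'a::comm_ring_1 mpoly set \<Rightarrow> 'a mpoly set \<Rightarrow> 'a mpoly set" where
  "ideal_sum I J = {a + b | a b. a \<in> I \<and> b \<in> J}"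

definition ideal_prod :: "nat \<Rightarrow> 'a::comm_ring_1 mpoly set \<Rightarrow> 'a mpoly set \<Rightarrow> 'a mpoly set" where
  "ideal_prod n I J = ideal_gen n {a * b | a b. a \<in> I \<and> b \<in> J}"

primrec ideal_pow :: "nat \<Rightarrow> 'a::comm_ring_1 mpoly set \<Rightarrow> nat \<Rightarrow> 'a mpoly set" where
  "ideal_pow n I 0 = polyR n"
| "ideal_pow n I (Suc k) = ideal_prod n I (ideal_pow n I k)"

definition ideal_ipow :: "nat \<Rightarrow> 'a::comm_ring_1 mpoly set \<Rightarrow> int \<Rightarrow> 'a mpoly set" where
  "ideal_ipow n I i = (if i \<le> 0 then polyR n else ideal_pow n I (nat i))"

definition ideal_colon :: "nat \<Rightarrow> 'a::comm_ring_1 mpoly set \<Rightarrow> 'a mpoly set \<Rightarrow> 'a mpoly set" where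
  "ideal_colon n I J = {f \<in> polyR n. \<forall>g \<in> J. f * g \<in> I}"

definition max_ideal :: "nat \<Rightarrow> 'a::comm_ring_1 mpoly set" where
  "max_ideal n = ideal_gen n {Var i | i. i \<le> n}"

definition frob_pow :: "nat \<Rightarrow> nat \<Rightarrow> 'a::comm_ring_1 mpoly set" where
  "frob_pow n q = ideal_gen n {Var i ^ q | i. i \<le> n}"

end

theory Submission
  imports Defs
begin

text \<open>A monomial \<open>x\<^sup>\<alpha>\<close> of \<open>f\<close> outside \<open>m\<^sup>[\<^sup>q\<^sup>]\<close> has all exponents \<open>\<alpha>\<^sub>i < q\<close>. If its degree were below
  \<open>(n+1)(q-d+1)\<close>, the gaps \<open>q-1-\<alpha>\<^sub>i\<close> would add up to at least \<open>K = (n+1)(d-2)+1\<close>, so there is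
  a monomial \<open>x\<^sup>\<beta>\<close> of degree \<open>K\<close> with \<open>\<alpha>\<^sub>i+\<beta>\<^sub>i \<le> q-1\<close> for all \<open>i\<close>. Then \<open>x\<^sup>\<beta> \<in> m\<^sup>K\<close>, but \<open>f x\<^sup>\<beta>\<close>
  contains the monomial \<open>x\<^sup>\<alpha>\<^sup>+\<^sup>\<beta>\<close>, which lies outside \<open>m\<^sup>[\<^sup>q\<^sup>]\<close>, contradicting \<open>f \<in> m\<^sup>[\<^sup>q\<^sup>] : m\<^sup>K\<close>.\<close>

lemma sum_mem_add_closed:
  assumes "0 \<in> S" "\<And>x y. x \<in> S \<Longrightarrow> y \<in> S \<Longrightarrow> x + y \<in> S" "\<And>a. a \<in> A \<Longrightarrow> h a \<in> S"
  shows "sum h A \<in> S"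
  using assms(3) by (induction A rule: infinite_finite_induct) (auto intro: assms(1,2))

lemma keys_diff_subset: "Poly_Mapping.keys (a - b) \<subseteq> Poly_Mapping.keys (a :: 'a \<Rightarrow>\<^sub>0 nat)"
  by (auto simp: in_keys_iff lookup_minus)

lemma diff_single_add_single:
  "k \<le> Poly_Mapping.lookup m i \<Longrightarrow> m - Poly_Mapping.single i k + Poly_Mapping.single i k = m"
  for m :: "'a \<Rightarrow>\<^sub>0 nat"
  by (rule poly_mapping_eqI) (auto simp: lookup_add lookup_minus lookup_single when_def)

definition monomial_degree :: "nat \<Rightarrow> (nat \<Rightarrow>\<^sub>0 nat) \<Rightarrow> nat" where
  "monomial_degree n m = (\<Sum>i\<le>n. Poly_Mapping.lookup m i)"

lemma monomial_degree_add:
  "monomial_degree n (a + b) = monomial_degree n a + monomial_degree n b"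
  by (simp add: monomial_degree_def lookup_add sum.distrib)

lemma monomial_degree_single: "i \<le> n \<Longrightarrow> monomial_degree n (Poly_Mapping.single i k) = k"
  by (simp add: monomial_degree_def lookup_single when_def)

lemma exists_monomial_below_with_degree:
  fixes u :: "nat \<Rightarrow> nat"
  assumes "k \<le> (\<Sum>i\<le>n. u i)"
  shows "\<exists>\<beta>. Poly_Mapping.keys \<beta> \<subseteq> {..n} \<and> (\<forall>i\<le>n. Poly_Mapping.lookup \<beta> i \<le> u i)
             \<and> monomial_degree n \<beta> = k"
  using assms
proof (induction n arbitrary: k)
  case 0
  show ?case
    by (rule exI[of _ "Poly_Mapping.single 0 k"]) (use 0 in \<open>auto simp: monomial_degree_def\<close>)
next
  case (Suc n)
  define t where "t = min k (u (Suc n))"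
  have "k - t \<le> (\<Sum>i\<le>n. u i)" using Suc.prems by (auto simp: t_def)
  then obtain \<beta> where \<beta>: "Poly_Mapping.keys \<beta> \<subseteq> {..n}" "\<forall>i\<le>n. Poly_Mapping.lookup \<beta> i \<le> u i"
      "monomial_degree n \<beta> = k - t"
    using Suc.IH by blast
  have top: "Poly_Mapping.lookup \<beta> (Suc n) = 0" using \<beta>(1) by (auto simp: in_keys_iff)
  have "monomial_degree (Suc n) \<beta> = k - t"
    using \<beta>(3) top by (simp add: monomial_degree_def)
  then have "monomial_degree (Suc n) (\<beta> + Poly_Mapping.single (Suc n) t) = k"
    by (simp add: monomial_degree_add monomial_degree_single t_def)
  moreover have "Poly_Mapping.keys (\<beta> + Poly_Mapping.single (Suc n) t) \<subseteq> {..Suc n}"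
    using \<beta>(1) keys_add[of \<beta> "Poly_Mapping.single (Suc n) t"] by (auto split: if_split_asm)
  moreover have "\<forall>i\<le>Suc n. Poly_Mapping.lookup (\<beta> + Poly_Mapping.single (Suc n) t) i \<le> u i"
    using \<beta>(2) top by (auto simp: lookup_add lookup_single when_def t_def le_Suc_eq)
  ultimately show ?case by blast
qed

lemma sum_single_lookup_keys:
  "(\<Sum>m\<in>Poly_Mapping.keys f. Poly_Mapping.single m (Poly_Mapping.lookup f m)) = f"
  by (rule poly_mapping_eqI) (auto simp: lookup_sum lookup_single when_def in_keys_iff)

lemma Var_pow: "(Var i :: 'a::comm_ring_1 mpoly) ^ k = Poly_Mapping.single (Poly_Mapping.single i k) 1"
  by (induction k) (simp_all add: Var_def mult_single single_add[symmetric])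

lemma lookup_mult_single_add:
  fixes f :: "'a::comm_ring_1 mpoly"
  shows "Poly_Mapping.lookup (f * Poly_Mapping.single \<beta> 1) (m + \<beta>) = Poly_Mapping.lookup f m"
proof -
  have "f * Poly_Mapping.single \<beta> 1
      = (\<Sum>m'\<in>Poly_Mapping.keys f. Poly_Mapping.single (m' + \<beta>) (Poly_Mapping.lookup f m'))"
    by (subst (1) sum_single_lookup_keys[of f, symmetric]) (simp add: sum_distrib_right mult_single)
  then have "Poly_Mapping.lookup (f * Poly_Mapping.single \<beta> 1) (m + \<beta>)
      = (\<Sum>m'\<in>Poly_Mapping.keys f. if m' = m then Poly_Mapping.lookup f m' else 0)"
    by (simp add: lookup_sum lookup_single when_def)
  also have "\<dots> = Poly_Mapping.lookup f m"
    by (cases "m \<in> Poly_Mapping.keys f") (auto simp: in_keys_iff)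
  finally show ?thesis .
qed

lemma polyR_0: "0 \<in> polyR n"
  by (simp add: polyR_def)

lemma polyR_add: "f \<in> polyR n \<Longrightarrow> g \<in> polyR n \<Longrightarrow> f + g \<in> polyR n"
  using keys_add[of f g] unfolding polyR_def by blast

lemma polyR_single: "Poly_Mapping.keys m \<subseteq> {..n} \<Longrightarrow> Poly_Mapping.single m c \<in> polyR n"
  unfolding polyR_def by auto

lemma polyR_one: "1 \<in> polyR n"
  unfolding polyR_def by auto

lemma ideal_gen_0: "0 \<in> ideal_gen n S"
  unfolding ideal_gen_def by (rule CollectI, rule exI[of _ 0]) auto

lemma ideal_gen_mult_generator: "c \<in> polyR n \<Longrightarrow> s \<in> S \<Longrightarrow> c * s \<in> ideal_gen n S"
  unfolding ideal_gen_def
  by (rule CollectI, rule exI[of _ 1], rule exI[of _ "\<lambda>_. c"], rule exI[of _ "\<lambda>_. s"]) auto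

lemma ideal_gen_add:
  assumes "x \<in> ideal_gen n S" "y \<in> ideal_gen n S"
  shows "x + y \<in> ideal_gen n S"
proof -
  obtain k1 :: nat and c1 g1 where x: "x = (\<Sum>i<k1. c1 i * g1 i)" "\<forall>i<k1. c1 i \<in> polyR n \<and> g1 i \<in> S"
    using assms(1) unfolding ideal_gen_def by auto
  obtain k2 :: nat and c2 g2 where y: "y = (\<Sum>i<k2. c2 i * g2 i)" "\<forall>i<k2. c2 i \<in> polyR n \<and> g2 i \<in> S"
    using assms(2) unfolding ideal_gen_def by auto
  define c where "c i = (if i < k1 then c1 i else c2 (i - k1))" for i
  define g where "g i = (if i < k1 then g1 i else g2 (i - k1))" for i
  have "(\<Sum>i<k1 + k2. c i * g i) = (\<Sum>i<k1. c i * g i) + (\<Sum>i<k2. c (k1 + i) * g (k1 + i))"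
    by (induction k2) (auto simp: add.assoc)
  also have "\<dots> = x + y" unfolding x y c_def g_def by simp
  finally have "x + y = (\<Sum>i<k1 + k2. c i * g i)" by simp
  moreover have "\<forall>i<k1 + k2. c i \<in> polyR n \<and> g i \<in> S"
    using x y unfolding c_def g_def by auto
  ultimately show ?thesis unfolding ideal_gen_def by blast
qed

lemma ideal_gen_sum: "(\<And>a. a \<in> A \<Longrightarrow> h a \<in> ideal_gen n S) \<Longrightarrow> sum h A \<in> ideal_gen n S"
  by (rule sum_mem_add_closed[OF ideal_gen_0 ideal_gen_add])

lemma ideal_ipow_0: "0 \<in> ideal_ipow n I k"
  by (cases "nat k") (auto simp: ideal_ipow_def polyR_0 ideal_prod_def ideal_gen_0)

lemma ideal_ipow_add: "x \<in> ideal_ipow n I k \<Longrightarrow> y \<in> ideal_ipow n I k \<Longrightarrow> x + y \<in> ideal_ipow n I k"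
  by (cases "nat k") (auto simp: ideal_ipow_def polyR_add ideal_prod_def ideal_gen_add)

lemma Var_mem_max_ideal: "i \<le> n \<Longrightarrow> Var i \<in> max_ideal n"
  unfolding max_ideal_def
  using ideal_gen_mult_generator[OF polyR_one, of "Var i" "{Var i | i. i \<le> n}" n] by auto

lemma single_mem_max_ideal_pow:
  "Poly_Mapping.keys \<beta> \<subseteq> {..n} \<Longrightarrow> k \<le> monomial_degree n \<beta> \<Longrightarrow>
   (Poly_Mapping.single \<beta> c :: 'a::comm_ring_1 mpoly) \<in> ideal_pow n (max_ideal n) k"
proof (induction k arbitrary: \<beta>)
  case 0
  then show ?case by (simp add: polyR_single)
next
  case (Suc k)
  then have "monomial_degree n \<beta> \<noteq> 0" by simp
  then obtain i where i: "i \<le> n" "1 \<le> Poly_Mapping.lookup \<beta> i"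
    unfolding monomial_degree_def by auto
  define \<beta>' where "\<beta>' = \<beta> - Poly_Mapping.single i 1"
  have \<beta>: "\<beta> = \<beta>' + Poly_Mapping.single i 1"
    using diff_single_add_single[OF i(2)] by (simp add: \<beta>'_def)
  have "Poly_Mapping.keys \<beta>' \<subseteq> {..n}"
    using keys_diff_subset[of \<beta>] Suc.prems(1) unfolding \<beta>'_def by blast
  moreover have "k \<le> monomial_degree n \<beta>'"
    using Suc.prems(2) i(1) by (simp add: \<beta> monomial_degree_add monomial_degree_single)
  ultimately have IH: "Poly_Mapping.single \<beta>' c \<in> ideal_pow n (max_ideal n) k"
    by (rule Suc.IH)
  have "(Poly_Mapping.single \<beta> c :: 'a mpoly) = 1 * (Var i * Poly_Mapping.single \<beta>' c)"
    by (simp add: \<beta> Var_def mult_single add.commute)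
  also have "\<dots> \<in> ideal_pow n (max_ideal n) (Suc k)"
    unfolding ideal_pow.simps ideal_prod_def
    by (rule ideal_gen_mult_generator[OF polyR_one]) (use Var_mem_max_ideal[OF i(1)] IH in blast)
  finally show ?case .
qed

lemma single_mem_max_ideal_ipow:
  "Poly_Mapping.keys \<beta> \<subseteq> {..n} \<Longrightarrow> k \<le> int (monomial_degree n \<beta>) \<Longrightarrow>
   (Poly_Mapping.single \<beta> c :: 'a::comm_ring_1 mpoly) \<in> ideal_ipow n (max_ideal n) k"
  unfolding ideal_ipow_def using polyR_single single_mem_max_ideal_pow[of \<beta> n "nat k" c] by auto

lemma single_mem_frob_pow:
  assumes "Poly_Mapping.keys m \<subseteq> {..n}" "i \<le> n" "q \<le> Poly_Mapping.lookup m i"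
  shows "(Poly_Mapping.single m c :: 'a::comm_ring_1 mpoly) \<in> frob_pow n q"
proof -
  define m' where "m' = m - Poly_Mapping.single i q"
  have "Poly_Mapping.keys m' \<subseteq> {..n}"
    using keys_diff_subset[of m] assms(1) unfolding m'_def by blast
  then have "Poly_Mapping.single m' c * Var i ^ q \<in> frob_pow n q"
    unfolding frob_pow_def
    by (rule ideal_gen_mult_generator[OF polyR_single]) (use assms(2) in blast)
  moreover have "(Poly_Mapping.single m c :: 'a mpoly) = Poly_Mapping.single m' c * Var i ^ q"
    using diff_single_add_single[OF assms(3)] by (simp add: m'_def Var_pow mult_single)
  ultimately show ?thesis by simp
qed

lemma keys_frob_pow:
  assumes "(f :: 'a::comm_ring_1 mpoly) \<in> frob_pow n q" "m \<in> Poly_Mapping.keys f"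
  shows "\<exists>i\<le>n. q \<le> Poly_Mapping.lookup m i"
proof -
  define S :: "'a mpoly set"
    where "S = {f. \<forall>m \<in> Poly_Mapping.keys f. \<exists>i\<le>n. q \<le> Poly_Mapping.lookup m i}"
  have add: "x + y \<in> S" if "x \<in> S" "y \<in> S" for x y
    using that keys_add[of x y] unfolding S_def by blast
  have generator: "c * Var j ^ q \<in> S" if "j \<le> n" for c :: "'a mpoly" and j
  proof -
    { fix m assume "m \<in> Poly_Mapping.keys (c * Var j ^ q)"
      then obtain a where "m = a + Poly_Mapping.single j q"
        using keys_mult[of c "Var j ^ q"] by (auto simp: Var_pow split: if_splits)
      then have "q \<le> Poly_Mapping.lookup m j" by (simp add: lookup_add)
      then have "\<exists>i\<le>n. q \<le> Poly_Mapping.lookup m i" using that by blast }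
    then show ?thesis unfolding S_def by auto
  qed
  obtain k :: nat and c g where f: "f = (\<Sum>i<k. c i * g i)" "\<forall>i<k. g i \<in> {Var i ^ q | i. i \<le> n}"
    using assms(1) unfolding frob_pow_def ideal_gen_def by auto
  have "f \<in> S"
    unfolding f(1)
  proof (rule sum_mem_add_closed[OF _ add])
    show "0 \<in> S" by (simp add: S_def)
  next
    fix i assume "i \<in> {..<k}"
    then obtain j where "j \<le> n" "g i = Var j ^ q" using f(2) by auto
    then show "c i * g i \<in> S" using generator by simp
  qed
  then show ?thesis using assms(2) unfolding S_def by blast
qed

lemma monomial_degree_of_keys_colon:
  fixes f :: "'a::comm_ring_1 mpoly"
  assumes f: "f \<in> ideal_colon n (frob_pow n q) (ideal_ipow n (max_ideal n) k)"
    and m: "m \<in> Poly_Mapping.keys f"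
    and below: "\<forall>i\<le>n. Poly_Mapping.lookup m i < q"
  shows "(int n + 1) * (int q - 1) - k < int (monomial_degree n m)"
proof (rule ccontr)
  assume small: "\<not> ?thesis"
  define u where "u i = q - 1 - Poly_Mapping.lookup m i" for i
  have "int (\<Sum>i\<le>n. u i) = (\<Sum>i\<le>n. int q - 1 - int (Poly_Mapping.lookup m i))"
    unfolding of_nat_sum using below by (intro sum.cong) (auto simp: u_def of_nat_diff)
  also have "\<dots> = (int n + 1) * (int q - 1) - int (monomial_degree n m)"
    by (simp add: sum_subtractf monomial_degree_def of_nat_sum)
  finally have "nat k \<le> (\<Sum>i\<le>n. u i)" using small by linarith
  then obtain \<beta> where \<beta>: "Poly_Mapping.keys \<beta> \<subseteq> {..n}" "\<forall>i\<le>n. Poly_Mapping.lookup \<beta> i \<le> u i"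
      "monomial_degree n \<beta> = nat k"
    using exists_monomial_below_with_degree by blast
  have "Poly_Mapping.single \<beta> 1 \<in> ideal_ipow n (max_ideal n) k"
    using \<beta>(1,3) by (intro single_mem_max_ideal_ipow) auto
  then have "f * Poly_Mapping.single \<beta> 1 \<in> frob_pow n q"
    using f unfolding ideal_colon_def by blast
  moreover have "m + \<beta> \<in> Poly_Mapping.keys (f * Poly_Mapping.single \<beta> 1)"
    using m by (simp add: lookup_mult_single_add in_keys_iff)
  ultimately obtain i where "i \<le> n" "q \<le> Poly_Mapping.lookup (m + \<beta>) i"
    using keys_frob_pow by blast
  then have i: "i \<le> n" "q \<le> Poly_Mapping.lookup m i + Poly_Mapping.lookup \<beta> i"
    by (simp_all add: lookup_add)
  moreover have "Poly_Mapping.lookup \<beta> i \<le> u i" "Poly_Mapping.lookup m i < q"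
    using \<beta>(2) below i(1) by blast+
  ultimately show False unfolding u_def by arith
qed

lemma mem_ideal_sum_frob_pow_ipowI:
  fixes f :: "'a::comm_ring_1 mpoly"
  assumes f: "f \<in> polyR n"
    and deg: "\<And>m. m \<in> Poly_Mapping.keys f \<Longrightarrow> \<forall>i\<le>n. Poly_Mapping.lookup m i < q \<Longrightarrow>
                   k \<le> int (monomial_degree n m)"
  shows "f \<in> ideal_sum (frob_pow n q) (ideal_ipow n (max_ideal n) k)"
proof -
  define P where "P m \<longleftrightarrow> (\<exists>i\<le>n. q \<le> Poly_Mapping.lookup m i)" for m :: "nat \<Rightarrow>\<^sub>0 nat"
  define h where "h m = Poly_Mapping.single m (Poly_Mapping.lookup f m)" for m
  have keys: "Poly_Mapping.keys m \<subseteq> {..n}" if "m \<in> Poly_Mapping.keys f" for m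
    using f that unfolding polyR_def by auto
  have "f = sum h (Poly_Mapping.keys f)"
    unfolding h_def by (rule sum_single_lookup_keys[symmetric])
  also have "\<dots> = sum h (Poly_Mapping.keys f \<inter> Collect P) + sum h (Poly_Mapping.keys f - Collect P)"
    by (rule sum.Int_Diff) simp
  finally have "f = \<dots>" .
  moreover have "sum h (Poly_Mapping.keys f \<inter> Collect P) \<in> frob_pow n q"
    unfolding frob_pow_def
  proof (rule ideal_gen_sum)
    fix m assume "m \<in> Poly_Mapping.keys f \<inter> Collect P"
    then obtain i where "m \<in> Poly_Mapping.keys f" "i \<le> n" "q \<le> Poly_Mapping.lookup m i"
      by (auto simp: P_def)
    then show "h m \<in> ideal_gen n {Var i ^ q |i. i \<le> n}"
      using single_mem_frob_pow[OF keys] unfolding h_def frob_pow_def by blast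
  qed
  moreover have "sum h (Poly_Mapping.keys f - Collect P) \<in> ideal_ipow n (max_ideal n) k"
  proof (rule sum_mem_add_closed[OF ideal_ipow_0 ideal_ipow_add])
    fix m assume "m \<in> Poly_Mapping.keys f - Collect P"
    then have "m \<in> Poly_Mapping.keys f" "\<forall>i\<le>n. Poly_Mapping.lookup m i < q"
      unfolding P_def using leI by blast+
    then show "h m \<in> ideal_ipow n (max_ideal n) k"
      unfolding h_def using single_mem_max_ideal_ipow keys deg by blast
  qed
  ultimately show ?thesis unfolding ideal_sum_def by blast
qed

theorem lemma3p2:
  fixes p e n d :: nat
  assumes "CHAR('a::field) = p" and "p > 0"
    and "q = p ^ e"
    and "d > 0"
  shows "(ideal_colon n (frob_pow n q :: 'a mpoly set)
            (ideal_ipow n (max_ideal n) ((int n + 1) * (int d - 2) + 1)))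
         \<subseteq> ideal_sum (frob_pow n q)
              (ideal_ipow n (max_ideal n) ((int n + 1) * (int q - int d + 1)))"
proof
  fix f :: "'a mpoly"
  assume f: "f \<in> ideal_colon n (frob_pow n q) (ideal_ipow n (max_ideal n) ((int n + 1) * (int d - 2) + 1))"
  have exponents: "(int n + 1) * (int q - 1) - ((int n + 1) * (int d - 2) + 1)
                 = (int n + 1) * (int q - int d + 1) - 1"
    by (simp add: algebra_simps)
  show "f \<in> ideal_sum (frob_pow n q) (ideal_ipow n (max_ideal n) ((int n + 1) * (int q - int d + 1)))"
  proof (rule mem_ideal_sum_frob_pow_ipowI)
    show "f \<in> polyR n" using f by (simp add: ideal_colon_def)
  next
    fix m assume "m \<in> Poly_Mapping.keys f" "\<forall>i\<le>n. Poly_Mapping.lookup m i < q"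
    with f have "(int n + 1) * (int q - 1) - ((int n + 1) * (int d - 2) + 1) < int (monomial_degree n m)"
      by (rule monomial_degree_of_keys_colon)
    then show "(int n + 1) * (int q - int d + 1) \<le> int (monomial_degree n m)"
      unfolding exponents by linarith
  qed
qed

end
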